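(* Let $(U,\mathrm{dist})$ be a metric space, $\varepsilon,\delta,\gamma>0$, $\eta>0$, $\Lambda\in\mathbb{R}_{>0}\cup\{\infty\}$. Let $g_L(x,x')=1+\gamma\,\mathrm{dist}(x,x')$. Let $f:U\to\mathbb{R}$ and let $B(\cdot)$ be a $g_L$-smooth upper bound on $\mathrm{L}_{f,\Lambda}$. Then the mechanism $M$ which on input $x$ releases $M(x)=f(x)+\frac{B(x)}{\eta}Z$ with $Z\sim\mathrm{Lap}(0,1)$ is $(\varepsilon,\delta,\Lambda)$-GP with $\varepsilon=\eta+\gamma\ln(1/\delta)$.
   Context: $\mathrm{L}_{f,\Lambda}(x)$ is the infimum of all $K$ such that $|f(x)-f(x')|\le K\,\mathrm{dist}(x,x')$ for all $x'\in U$ with $\mathrm{dist}(x,x')\le\Lambda$. A $g$-smooth upper bound on $\mathrm{L}_{f,\Lambda}$ is $B:U\to\mathbb{R}_{\ge0}$ with (1) $B(x)\ge\mathrm{L}_{f,\Lambda}(x)$ for all $x$ and (2) $B(x)\le g(x,x')B(x')$ for all $x,x'\in U$. $\mathrm{Lap}(0,1)$ has density $\frac12e^{-|y|}$. A mechanism $M$ with outputs in $\mathbb{R}$ is $(\varepsilon,\delta,\Lambda)$-GP if for every measurable $S\subseteq\mathbb{R}$ and all $x,x'$ with $\mathrm{dist}(x,x')\le\Lambda$: $\Pr[M(x)\in S]\le e^{\varepsilon\,\mathrm{dist}(x,x')}\Pr[M(x')\in S]+\delta$. *)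

theory Defs
  imports "HOL-Probability.Probability"
begin

text \<open>Lambda is an extended real so that Lambda = infinity is allowed.\<close>
definition local_lip :: "('a::metric_space \<Rightarrow> real) \<Rightarrow> ereal \<Rightarrow> 'a \<Rightarrow> ereal" where
  "local_lip f \<Lambda> x = Inf {ereal K | K. \<forall>x'. ereal (dist x x') \<le> \<Lambda> \<longrightarrow>
      \<bar>f x - f x'\<bar> \<le> K * dist x x'}"

definition smooth_upper_bound ::
  "('a::metric_space \<Rightarrow> 'a \<Rightarrow> real) \<Rightarrow> ('a \<Rightarrow> real) \<Rightarrow> ereal \<Rightarrow> ('a \<Rightarrow> real) \<Rightarrow> bool" where
  "smooth_upper_bound g f \<Lambda> B \<longleftrightarrow>
     (\<forall>x. B x \<ge> 0) \<and>
     (\<forall>x. local_lip f \<Lambda> x \<le> ereal (B x)) \<and>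
     (\<forall>x x'. B x \<le> g x x' * B x')"

definition laplace_measure :: "real measure" where
  "laplace_measure = density lborel (\<lambda>y. ennreal (exp (- \<bar>y\<bar>) / 2))"

definition laplace_mech :: "('a \<Rightarrow> real) \<Rightarrow> ('a \<Rightarrow> real) \<Rightarrow> real \<Rightarrow> 'a \<Rightarrow> real measure" where
  "laplace_mech f B \<eta> x = distr laplace_measure borel (\<lambda>z. f x + B x / \<eta> * z)"

definition is_GP :: "('a::metric_space \<Rightarrow> real measure) \<Rightarrow> real \<Rightarrow> real \<Rightarrow> ereal \<Rightarrow> bool" where
  "is_GP M \<epsilon> \<delta> \<Lambda> \<longleftrightarrow>
     (\<forall>S \<in> sets borel. \<forall>x x'. ereal (dist x x') \<le> \<Lambda> \<longrightarrow>
        measure (M x) S \<le> exp (\<epsilon> * dist x x') * measure (M x') S + \<delta>)"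

end

theory Submission
  imports Defs
begin

(* Write m = f x, s = B x / eta, d = dist x x', and m', s' for the same quantities at x'.
   The substitution w = (m - m') / s' + (s / s') z turns both output probabilities into
   integrals of the Laplace density p against the same indicator, M(x') contributing
   rho * p (t + rho z) with rho = s / s' and |t| <= eta d (local Lipschitz bound), while
   smoothness of B gives 1 <= (1 + gamma d) rho and rho <= 1 + gamma d. The shift t costs
   the factor e^(eta d). If rho <= 1, the remaining factor rho is absorbed by
   e^(gamma d ln(1/delta)) up to delta * p z, because
   (1 - delta)(1 + gamma d) <= 1 + gamma d ln(1/delta).
   If rho > 1, then p z <= e^((rho - 1)|z|) p (rho z) with (rho - 1)|z| <= gamma d ln(1/delta)
   as long as |z| <= ln(1/delta), and the Laplace tail beyond ln(1/delta) has mass delta. *)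

definition laplace_pdf :: "real \<Rightarrow> real" where
  "laplace_pdf z = exp (- \<bar>z\<bar>) / 2"

definition laplace_loc_scale :: "real \<Rightarrow> real \<Rightarrow> real measure" where
  "laplace_loc_scale m s = distr laplace_measure borel (\<lambda>z. m + s * z)"

lemma laplace_mech_eq_laplace_loc_scale:
  "laplace_mech f B \<eta> x = laplace_loc_scale (f x) (B x / \<eta>)"
  by (simp add: laplace_mech_def laplace_loc_scale_def)

lemma local_lip_le:
  fixes f :: "'a::metric_space \<Rightarrow> real"
  assumes lip: "local_lip f \<Lambda> x \<le> ereal b" and near: "ereal (dist x x') \<le> \<Lambda>"
  shows "\<bar>f x - f x'\<bar> \<le> b * dist x x'"
proof -
  have bound: "\<bar>f x - f x'\<bar> \<le> K * dist x x'" if "b < K" for K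
  proof -
    from lip \<open>b < K\<close> have "local_lip f \<Lambda> x < ereal K"
      by (simp add: le_less_trans)
    then obtain K0 where "K0 < K"
      and "\<forall>x'. ereal (dist x x') \<le> \<Lambda> \<longrightarrow> \<bar>f x - f x'\<bar> \<le> K0 * dist x x'"
      unfolding local_lip_def Inf_less_iff by auto
    with near have "\<bar>f x - f x'\<bar> \<le> K0 * dist x x'" by blast
    also have "\<dots> \<le> K * dist x x'"
      using \<open>K0 < K\<close> by (simp add: mult_right_mono)
    finally show ?thesis .
  qed
  show ?thesis
  proof (cases "x = x'")
    case False
    then have "0 < dist x x'" by simp
    have "\<bar>f x - f x'\<bar> / dist x x' \<le> b"
    proof (rule dense_ge)
      fix K
      assume "b < K"
      with bound \<open>0 < dist x x'\<close> show "\<bar>f x - f x'\<bar> / dist x x' \<le> K"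
        by (simp add: pos_divide_le_eq)
    qed
    with \<open>0 < dist x x'\<close> show ?thesis
      by (simp add: pos_divide_le_eq)
  qed simp
qed

lemma laplace_pdf_nonneg: "0 \<le> laplace_pdf z"
  by (simp add: laplace_pdf_def)

lemma borel_measurable_laplace_pdf [measurable]: "laplace_pdf \<in> borel_measurable borel"
  unfolding laplace_pdf_def by measurable

lemma laplace_measure_eq_density:
  "laplace_measure = density lborel (\<lambda>z. ennreal (laplace_pdf z))"
  by (simp add: laplace_measure_def laplace_pdf_def)

lemma nn_integral_laplace_pdf_Ici:
  assumes "0 \<le> a"
  shows "(\<integral>\<^sup>+z. ennreal (laplace_pdf z) * indicator {a..} z \<partial>lborel) = ennreal (exp (- a) / 2)"
proof -
  have "(\<integral>\<^sup>+z. ennreal (laplace_pdf z) * indicator {a..} z \<partial>lborel)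
      = (\<integral>\<^sup>+z. ennreal (laplace_pdf (a + 1 * z)) * indicator {a..} (a + 1 * z) \<partial>lborel)"
    by (subst nn_integral_real_affine[where c = 1 and t = a]) auto
  also have "\<dots> = (\<integral>\<^sup>+z. ennreal (exp (- a) / 2) * (ennreal (exp (- z)) * indicator {0..} z) \<partial>lborel)"
    using assms
    by (intro nn_integral_cong)
      (auto simp: laplace_pdf_def exp_add exp_minus ennreal_mult'[symmetric] field_simps
        split: split_indicator)
  also have "\<dots> = ennreal (exp (- a) / 2)"
    using nn_intergal_power_times_exp_Ici[of 0] by (simp add: nn_integral_cmult)
  finally show ?thesis .
qed

lemma nn_integral_laplace_pdf_tail_le:
  assumes "0 \<le> a"
  shows "(\<integral>\<^sup>+z. ennreal (laplace_pdf z) * indicator {z. a \<le> \<bar>z\<bar>} z \<partial>lborel)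
    \<le> ennreal (exp (- a))"
proof -
  let ?right = "\<lambda>z. ennreal (laplace_pdf z) * indicator {a..} z"
  have "(\<integral>\<^sup>+z. ennreal (laplace_pdf z) * indicator {z. a \<le> \<bar>z\<bar>} z \<partial>lborel)
      \<le> (\<integral>\<^sup>+z. ?right z + ?right (- z) \<partial>lborel)"
    by (intro nn_integral_mono) (auto simp: laplace_pdf_def split: split_indicator)
  also have "\<dots> = (\<integral>\<^sup>+z. ?right z \<partial>lborel) + (\<integral>\<^sup>+z. ?right (- z) \<partial>lborel)"
    by (rule nn_integral_add) auto
  also have "(\<integral>\<^sup>+z. ?right (- z) \<partial>lborel) = (\<integral>\<^sup>+z. ?right z \<partial>lborel)"
    using nn_integral_real_affine[of ?right "- 1" 0] by simp
  also have "(\<integral>\<^sup>+z. ?right z \<partial>lborel) = ennreal (exp (- a) / 2)"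
    using assms by (rule nn_integral_laplace_pdf_Ici)
  also have "ennreal (exp (- a) / 2) + ennreal (exp (- a) / 2) = ennreal (exp (- a))"
    by (simp flip: ennreal_plus)
  finally show ?thesis .
qed

lemma nn_integral_laplace_pdf_le_1: "(\<integral>\<^sup>+z. ennreal (laplace_pdf z) \<partial>lborel) \<le> 1"
  using nn_integral_laplace_pdf_tail_le[of 0] by simp

lemma subprob_space_laplace_loc_scale: "subprob_space (laplace_loc_scale m s)"
proof -
  have "subprob_space laplace_measure"
  proof
    show "emeasure laplace_measure (space laplace_measure) \<le> 1"
      using nn_integral_laplace_pdf_le_1
      by (simp add: laplace_measure_eq_density emeasure_density)
  qed (simp add: laplace_measure_def)
  then show ?thesis
    unfolding laplace_loc_scale_def
    by (rule subprob_space.subprob_space_distr) (simp_all add: laplace_measure_def)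
qed

lemma emeasure_laplace_loc_scale:
  assumes [measurable]: "S \<in> sets borel"
  shows "emeasure (laplace_loc_scale m s) S
    = (\<integral>\<^sup>+z. ennreal (laplace_pdf z) * indicator S (m + s * z) \<partial>lborel)"
proof -
  have "emeasure (laplace_loc_scale m s) S = emeasure laplace_measure ((\<lambda>z. m + s * z) -` S)"
    unfolding laplace_loc_scale_def by (subst emeasure_distr) (simp_all add: laplace_measure_def)
  also have "\<dots> = (\<integral>\<^sup>+z. ennreal (laplace_pdf z) * indicator ((\<lambda>z. m + s * z) -` S) z \<partial>lborel)"
    using measurable_sets_borel[of "\<lambda>z. m + s * z" borel S]
    unfolding laplace_measure_eq_density by (intro emeasure_density) simp_all
  finally show ?thesis by (simp only: indicator_vimage)
qed

lemma emeasure_laplace_loc_scale_rescaled: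
  assumes [measurable]: "S \<in> sets borel" and "0 < s" "0 < s'"
  shows "emeasure (laplace_loc_scale m' s') S = ennreal (s / s') *
    (\<integral>\<^sup>+z. ennreal (laplace_pdf ((m - m') / s' + s / s' * z)) * indicator S (m + s * z) \<partial>lborel)"
proof -
  have "\<And>z. m' + s' * ((m - m') / s' + s / s' * z) = m + s * z"
    using \<open>0 < s'\<close> by (simp add: field_simps)
  then show ?thesis
    using assms emeasure_laplace_loc_scale[of S m' s']
      nn_integral_real_affine[of "\<lambda>w. ennreal (laplace_pdf w) * indicator S (m' + s' * w)" "s / s'" "(m - m') / s'"]
    by simp
qed

lemma laplace_pdf_shifted_ge:
  assumes "0 \<le> \<rho>" and "\<bar>t\<bar> \<le> a"
  shows "exp (- \<rho> * \<bar>z\<bar>) / 2 \<le> exp a * laplace_pdf (t + \<rho> * z)"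
proof -
  have "\<bar>t + \<rho> * z\<bar> \<le> a + \<rho> * \<bar>z\<bar>"
    using assms abs_triangle_ineq[of t "\<rho> * z"] by (simp add: abs_mult)
  then have "exp (- \<rho> * \<bar>z\<bar>) \<le> exp a * exp (- \<bar>t + \<rho> * z\<bar>)"
    by (simp flip: exp_add)
  then show ?thesis
    by (simp add: laplace_pdf_def)
qed

lemma laplace_pdf_le_contracted:
  assumes "0 < \<rho>" "\<rho> \<le> 1" "1 \<le> (1 + c) * \<rho>" "0 \<le> c" "\<bar>t\<bar> \<le> a" "0 < \<delta>" "\<delta> < 1"
  shows "laplace_pdf z \<le> exp (a + c * ln (1 / \<delta>)) * \<rho> * laplace_pdf (t + \<rho> * z) + \<delta> * laplace_pdf z"
proof -
  define L where "L = ln (1 / \<delta>)"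
  have "1 - \<delta> \<le> L"
    using ln_le_minus_one[of \<delta>] \<open>0 < \<delta>\<close> by (simp add: L_def ln_div)
  then have "c * (1 - \<delta>) \<le> c * L"
    using \<open>0 \<le> c\<close> by (rule mult_left_mono)
  then have mass_factor: "(1 - \<delta>) * (1 + c) \<le> 1 + c * L"
    using \<open>0 < \<delta>\<close> by (simp add: algebra_simps)
  have "1 - \<delta> \<le> (1 - \<delta>) * ((1 + c) * \<rho>)"
    using assms(3) \<open>\<delta> < 1\<close> by (simp add: mult_le_cancel_left1)
  also have "\<dots> = ((1 - \<delta>) * (1 + c)) * \<rho>"
    by (simp only: mult.assoc)
  also have "\<dots> \<le> (1 + c * L) * \<rho>"
    using mass_factor \<open>0 < \<rho>\<close> by (intro mult_right_mono) simp_all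
  also have "\<dots> \<le> exp (c * L) * \<rho>"
    using \<open>0 < \<rho>\<close> by (simp add: exp_ge_add_one_self)
  finally have mass: "1 - \<delta> \<le> exp (c * L) * \<rho>" .
  have "laplace_pdf z \<le> exp (- \<rho> * \<bar>z\<bar>) / 2"
    using \<open>0 < \<rho>\<close> \<open>\<rho> \<le> 1\<close> by (simp add: laplace_pdf_def mult_left_le_one_le)
  also have "\<dots> \<le> exp a * laplace_pdf (t + \<rho> * z)"
    using assms by (intro laplace_pdf_shifted_ge) simp_all
  finally have "(1 - \<delta>) * laplace_pdf z \<le> exp (c * L) * \<rho> * (exp a * laplace_pdf (t + \<rho> * z))"
    using mass \<open>\<delta> < 1\<close> by (intro mult_mono) (simp_all add: laplace_pdf_nonneg)
  then show ?thesis
    by (simp add: L_def exp_add algebra_simps)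
qed

lemma laplace_pdf_le_expanded:
  assumes "1 \<le> \<rho>" "\<rho> \<le> 1 + c" "\<bar>t\<bar> \<le> a" "\<bar>z\<bar> \<le> L"
  shows "laplace_pdf z \<le> exp (a + c * L) * \<rho> * laplace_pdf (t + \<rho> * z)"
proof -
  have "(\<rho> - 1) * \<bar>z\<bar> \<le> c * L"
    using assms by (intro mult_mono) simp_all
  then have "exp (- \<bar>z\<bar>) / 2 \<le> exp (c * L) * (exp (- \<rho> * \<bar>z\<bar>) / 2)"
    by (simp flip: exp_add add: algebra_simps)
  also have "\<dots> \<le> exp (c * L) * (exp a * laplace_pdf (t + \<rho> * z))"
    using assms by (intro mult_left_mono laplace_pdf_shifted_ge) simp_all
  also have "\<dots> \<le> exp (c * L) * (exp a * laplace_pdf (t + \<rho> * z)) * \<rho>"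
    using mult_left_mono[OF \<open>1 \<le> \<rho>\<close>, of "exp (c * L) * (exp a * laplace_pdf (t + \<rho> * z))"]
    by (simp add: laplace_pdf_nonneg)
  finally show ?thesis
    by (simp add: laplace_pdf_def exp_add algebra_simps)
qed

lemma laplace_pdf_le_rescaled_plus_remainder:
  assumes "0 < \<rho>" "\<rho> \<le> 1 + c" "1 \<le> (1 + c) * \<rho>" "0 \<le> c" "\<bar>t\<bar> \<le> a" "0 < \<delta>" "\<delta> < 1"
  obtains r :: "real \<Rightarrow> ennreal"
  where "r \<in> borel_measurable borel" and "(\<integral>\<^sup>+z. r z \<partial>lborel) \<le> ennreal \<delta>"
    and "\<And>z. ennreal (laplace_pdf z)
      \<le> ennreal (exp (a + c * ln (1 / \<delta>)) * \<rho>) * ennreal (laplace_pdf (t + \<rho> * z)) + r z"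
proof (cases "\<rho> \<le> 1")
  case True
  show ?thesis
  proof (rule that[of "\<lambda>z. ennreal (\<delta> * laplace_pdf z)"])
    show "(\<integral>\<^sup>+z. ennreal (\<delta> * laplace_pdf z) \<partial>lborel) \<le> ennreal \<delta>"
      using mult_left_mono[OF nn_integral_laplace_pdf_le_1, of "ennreal \<delta>"] \<open>0 < \<delta>\<close>
      by (simp add: ennreal_mult laplace_pdf_nonneg nn_integral_cmult)
  next
    fix z
    have "laplace_pdf z \<le> exp (a + c * ln (1 / \<delta>)) * \<rho> * laplace_pdf (t + \<rho> * z) + \<delta> * laplace_pdf z"
      using True assms by (intro laplace_pdf_le_contracted) simp_all
    then show "ennreal (laplace_pdf z) \<le> ennreal (exp (a + c * ln (1 / \<delta>)) * \<rho>)
        * ennreal (laplace_pdf (t + \<rho> * z)) + ennreal (\<delta> * laplace_pdf z)"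
      using assms by (simp add: laplace_pdf_nonneg ennreal_leI flip: ennreal_plus ennreal_mult)
  qed measurable
next
  case False
  define L where "L = ln (1 / \<delta>)"
  show ?thesis
  proof (rule that[of "\<lambda>z. ennreal (laplace_pdf z) * indicator {z. L \<le> \<bar>z\<bar>} z"])
    have "(\<integral>\<^sup>+z. ennreal (laplace_pdf z) * indicator {z. L \<le> \<bar>z\<bar>} z \<partial>lborel) \<le> ennreal (exp (- L))"
      using \<open>0 < \<delta>\<close> \<open>\<delta> < 1\<close> by (intro nn_integral_laplace_pdf_tail_le) (simp add: L_def)
    then show "(\<integral>\<^sup>+z. ennreal (laplace_pdf z) * indicator {z. L \<le> \<bar>z\<bar>} z \<partial>lborel) \<le> ennreal \<delta>"
      using \<open>0 < \<delta>\<close> by (simp add: L_def ln_div)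
  next
    fix z
    show "ennreal (laplace_pdf z) \<le> ennreal (exp (a + c * ln (1 / \<delta>)) * \<rho>)
        * ennreal (laplace_pdf (t + \<rho> * z)) + ennreal (laplace_pdf z) * indicator {z. L \<le> \<bar>z\<bar>} z"
    proof (cases "L \<le> \<bar>z\<bar>")
      case False
      then have "laplace_pdf z \<le> exp (a + c * L) * \<rho> * laplace_pdf (t + \<rho> * z)"
        using \<open>\<not> \<rho> \<le> 1\<close> assms by (intro laplace_pdf_le_expanded) simp_all
      with False show ?thesis
        using assms by (simp add: L_def laplace_pdf_nonneg ennreal_leI flip: ennreal_mult)
    qed (simp add: add_increasing)
  qed measurable
qed

lemma emeasure_laplace_loc_scale_le:
  assumes [measurable]: "S \<in> sets borel"
    and "0 < s" "0 < s'" "0 \<le> c" "\<bar>m - m'\<bar> \<le> a * s'" "s \<le> (1 + c) * s'" "s' \<le> (1 + c) * s"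
    and "0 < \<delta>" "\<delta> < 1"
  shows "emeasure (laplace_loc_scale m s) S
    \<le> ennreal (exp (a + c * ln (1 / \<delta>))) * emeasure (laplace_loc_scale m' s') S + ennreal \<delta>"
proof -
  define \<rho> t where "\<rho> = s / s'" and "t = (m - m') / s'"
  let ?K = "exp (a + c * ln (1 / \<delta>))"
  have "0 < \<rho>"
    using assms by (simp add: \<rho>_def)
  moreover have "\<rho> \<le> 1 + c"
    using \<open>s \<le> (1 + c) * s'\<close> \<open>0 < s'\<close> by (simp add: \<rho>_def pos_divide_le_eq)
  moreover have "1 \<le> (1 + c) * \<rho>"
    using \<open>s' \<le> (1 + c) * s\<close> \<open>0 < s'\<close> by (simp add: \<rho>_def pos_le_divide_eq)
  moreover have "\<bar>t\<bar> \<le> a"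
    using \<open>\<bar>m - m'\<bar> \<le> a * s'\<close> \<open>0 < s'\<close> by (simp add: t_def abs_divide pos_divide_le_eq)
  ultimately obtain r where [measurable]: "r \<in> borel_measurable borel"
    and r_integral: "(\<integral>\<^sup>+z. r z \<partial>lborel) \<le> ennreal \<delta>"
    and pdf_le: "\<And>z. ennreal (laplace_pdf z) \<le> ennreal (?K * \<rho>) * ennreal (laplace_pdf (t + \<rho> * z)) + r z"
    using \<open>0 \<le> c\<close> \<open>0 < \<delta>\<close> \<open>\<delta> < 1\<close> laplace_pdf_le_rescaled_plus_remainder by blast
  have "emeasure (laplace_loc_scale m s) S
      = (\<integral>\<^sup>+z. ennreal (laplace_pdf z) * indicator S (m + s * z) \<partial>lborel)"
    by (rule emeasure_laplace_loc_scale) fact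
  also have "\<dots> \<le> (\<integral>\<^sup>+z. ennreal (?K * \<rho>) *
      (ennreal (laplace_pdf (t + \<rho> * z)) * indicator S (m + s * z)) + r z \<partial>lborel)"
    using pdf_le by (intro nn_integral_mono) (simp split: split_indicator)
  also have "\<dots> = ennreal (?K * \<rho>) *
      (\<integral>\<^sup>+z. ennreal (laplace_pdf (t + \<rho> * z)) * indicator S (m + s * z) \<partial>lborel)
      + (\<integral>\<^sup>+z. r z \<partial>lborel)"
    by (simp add: nn_integral_add nn_integral_cmult)
  also have "ennreal (?K * \<rho>) *
      (\<integral>\<^sup>+z. ennreal (laplace_pdf (t + \<rho> * z)) * indicator S (m + s * z) \<partial>lborel)
      = ennreal ?K * emeasure (laplace_loc_scale m' s') S"
    using emeasure_laplace_loc_scale_rescaled[OF assms(1-3), of m' m] \<open>0 < \<rho>\<close>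
    unfolding \<rho>_def[symmetric] t_def[symmetric] by (simp add: ennreal_mult mult.assoc)
  finally show ?thesis
    using add_left_mono[OF r_integral] by (rule order_trans)
qed

lemma measure_laplace_loc_scale_le:
  assumes S: "S \<in> sets borel"
    and "0 \<le> s" "0 \<le> s'" "0 \<le> a" "0 \<le> c" "\<bar>m - m'\<bar> \<le> a * s'" "s \<le> (1 + c) * s'" "s' \<le> (1 + c) * s"
    and "0 < \<delta>"
  shows "measure (laplace_loc_scale m s) S
    \<le> exp (a + c * ln (1 / \<delta>)) * measure (laplace_loc_scale m' s') S + \<delta>"
proof -
  interpret P: subprob_space "laplace_loc_scale m s"
    by (rule subprob_space_laplace_loc_scale)
  interpret P': subprob_space "laplace_loc_scale m' s'"
    by (rule subprob_space_laplace_loc_scale)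
  have P'_nonneg: "0 \<le> exp (a + c * ln (1 / \<delta>)) * measure (laplace_loc_scale m' s') S"
    by simp
  consider "1 \<le> \<delta>" | "\<delta> < 1" "s = 0" | "\<delta> < 1" "0 < s"
    using \<open>0 \<le> s\<close> by linarith
  then show ?thesis
  proof cases
    case 1
    then show ?thesis
      using P.subprob_measure_le_1[of S] P'_nonneg by linarith
  next
    case 2
    then have "s' = 0" "m' = m"
      using assms by auto
    moreover have "1 \<le> exp (a + c * ln (1 / \<delta>))"
      using 2 assms by simp
    ultimately show ?thesis
      using 2 \<open>0 < \<delta>\<close>
        mult_right_mono[of 1 "exp (a + c * ln (1 / \<delta>))" "measure (laplace_loc_scale m s) S"]
      by simp
  next
    case 3
    then have "0 < s'"
      using assms by (cases "s' = 0") auto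
    with 3 assms have "emeasure (laplace_loc_scale m s) S
        \<le> ennreal (exp (a + c * ln (1 / \<delta>))) * emeasure (laplace_loc_scale m' s') S + ennreal \<delta>"
      by (intro emeasure_laplace_loc_scale_le) simp_all
    then have "ennreal (measure (laplace_loc_scale m s) S)
        \<le> ennreal (exp (a + c * ln (1 / \<delta>)) * measure (laplace_loc_scale m' s') S + \<delta>)"
      using \<open>0 < \<delta>\<close> by (simp add: P.emeasure_eq_measure P'.emeasure_eq_measure ennreal_mult ennreal_plus)
    moreover have "0 \<le> exp (a + c * ln (1 / \<delta>)) * measure (laplace_loc_scale m' s') S + \<delta>"
      using P'_nonneg \<open>0 < \<delta>\<close> by linarith
    ultimately show ?thesis
      by (simp only: ennreal_le_iff)
  qed
qed

theorem mainTheorem6: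
  fixes f B :: "'a::metric_space \<Rightarrow> real"
    and \<epsilon> \<delta> \<gamma> \<eta> :: real and \<Lambda> :: ereal
  assumes "\<delta> > 0" and "\<gamma> > 0" and "\<eta> > 0" and "\<Lambda> > 0"
    and "smooth_upper_bound (\<lambda>x x'. 1 + \<gamma> * dist x x') f \<Lambda> B"
    and "\<epsilon> = \<eta> + \<gamma> * ln (1 / \<delta>)"
  shows "is_GP (laplace_mech f B \<eta>) \<epsilon> \<delta> \<Lambda>"
  unfolding is_GP_def laplace_mech_eq_laplace_loc_scale
proof (intro ballI allI impI)
  fix S :: "real set" and x x' :: 'a
  assume S: "S \<in> sets borel" and near: "ereal (dist x x') \<le> \<Lambda>"
  have B_nonneg: "\<And>x. 0 \<le> B x" and B_lip: "\<And>x. local_lip f \<Lambda> x \<le> ereal (B x)"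
    and B_smooth: "\<And>x y. B x \<le> (1 + \<gamma> * dist x y) * B y"
    using assms(5) unfolding smooth_upper_bound_def by auto
  let ?d = "dist x x'"
  have "\<bar>f x' - f x\<bar> \<le> B x' * dist x' x"
    using near by (intro local_lip_le[OF B_lip]) (simp add: dist_commute)
  then have "\<bar>f x - f x'\<bar> \<le> (\<eta> * ?d) * (B x' / \<eta>)"
    using \<open>\<eta> > 0\<close> by (simp add: abs_minus_commute dist_commute mult.commute)
  moreover have "B x / \<eta> \<le> (1 + \<gamma> * ?d) * (B x' / \<eta>)" "B x' / \<eta> \<le> (1 + \<gamma> * ?d) * (B x / \<eta>)"
    using B_smooth[of x x'] B_smooth[of x' x] \<open>\<eta> > 0\<close> by (simp_all add: divide_right_mono dist_commute)
  ultimately have "measure (laplace_loc_scale (f x) (B x / \<eta>)) S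
      \<le> exp (\<eta> * ?d + \<gamma> * ?d * ln (1 / \<delta>)) * measure (laplace_loc_scale (f x') (B x' / \<eta>)) S + \<delta>"
    using assms(1-3) B_nonneg S by (intro measure_laplace_loc_scale_le) simp_all
  then show "measure (laplace_loc_scale (f x) (B x / \<eta>)) S
      \<le> exp (\<epsilon> * ?d) * measure (laplace_loc_scale (f x') (B x' / \<eta>)) S + \<delta>"
    by (simp add: assms(6) algebra_simps)
qed

end
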